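(* Let $k$ be an odd positive integer, let $D=k^2+1$ and $n=k^2$. Suppose $(a,b)$ and $(a',b')$ are two primitive solutions (i.e. $\gcd(a,b)=\gcd(a',b')=1$) of $X^2-DY^2=n$ such that $(a,b)$ is equivalent neither to $(a',b')$ nor to $(a',-b')$. Then there exist coprime integers $p,q$, both greater than $1$, with $k=pq$, such that both $p^4$ and $q^4$ are primitively represented by the form $X^2-DY^2$, i.e. there are coprime integers $u_1,v_1$ with $u_1^2-Dv_1^2=p^4$ and coprime integers $u_2,v_2$ with $u_2^2-Dv_2^2=q^4$.
   Context: Two solutions $(x,y)$ and $(x',y')$ of $X^2-DY^2=n$ are called equivalent if $xx'\equiv Dyy' \pmod{n}$ and $xy'\equiv yx'\pmod{n}$. *)

theory Defs
  imports "HOL-Number_Theory.Number_Theory"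
begin

definition pell_sol :: "int \<Rightarrow> int \<Rightarrow> int \<Rightarrow> int \<Rightarrow> bool" where
  "pell_sol D n x y \<longleftrightarrow> x^2 - D * y^2 = n"

definition pell_equiv :: "int \<Rightarrow> int \<Rightarrow> int \<times> int \<Rightarrow> int \<times> int \<Rightarrow> bool" where
  "pell_equiv D n s t \<longleftrightarrow>
     [fst s * fst t = D * snd s * snd t] (mod n) \<and>
     [fst s * snd t = snd s * fst t] (mod n)"

end

theory Submission
  imports Defs "HOL-Computational_Algebra.Nth_Powers"
begin

(* Write D = k^2 + 1 and n = k^2.  Brahmagupta composition of (a,b) with
   (a',b') and with its conjugate (a',-b') gives two solutions (X,Y), (X',Y') of
   X^2 - D Y^2 = n^2 = k^4, and Y * Y' = n (b'^2 - b^2) is divisible by n.  Because k is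
   odd and (a,b), (a',b') are primitive, gcd(n,Y) and gcd(n,Y') are coprime, hence
   n = gcd(n,Y) * gcd(n,Y'), so gcd(n,Y) = p^2 and gcd(n,Y') = q^2 with k = p q.
   Dividing (X,Y) by p^2 yields a primitive solution for q^4, and dividing (X',Y')
   by q^2 one for p^4.  Finally p = 1 (resp. q = 1) would make n divide Y' (resp. Y),
   i.e. (a,b) would be equivalent to (a',-b') (resp. (a',b')). *)

lemma composition_norm:
  fixes a b a' b' D :: "'a :: comm_ring_1"
  shows "(a*a' - D*b*b')^2 - D*(a*b' - b*a')^2 = (a^2 - D*b^2) * (a'^2 - D*b'^2)"
  by (simp add: power2_eq_square algebra_simps)

text \<open>Relates the first coordinate of a composition to its second one; it shows that a
  divisor of the norm of (a,b) which divides the second coordinate divides the first.\<close>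
lemma composition_fst_identity:
  fixes a b a' b' D :: "'a :: comm_ring_1"
  shows "a * (a*a' - D*b*b') = (a^2 - D*b^2) * a' - D*b*(a*b' - b*a')"
  by (simp add: power2_eq_square algebra_simps)

text \<open>The product of the second coordinates of the two compositions (with (a',b') and
  with (a',-b')) is a combination of the two norms.\<close>
lemma composition_snd_product:
  fixes a b a' b' D :: "'a :: comm_ring_1"
  shows "(a*b' - b*a') * (a*b' + b*a') = (a^2 - D*b^2) * b'^2 - (a'^2 - D*b'^2) * b^2"
  by (simp add: power2_eq_square algebra_simps)

lemma coprime_norm_fst:
  fixes a b D n :: int
  assumes sol: "a^2 - D*b^2 = n" and "coprime a b" and "coprime n D"
  shows "coprime n a"
proof (rule coprimeI)
  fix d assume dn: "d dvd n" and da: "d dvd a"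
  have "d dvd a^2 - n"
    using dn da by (simp add: power2_eq_square)
  moreover have "a^2 - n = D * b^2"
    using sol by simp
  ultimately have "d dvd D * b^2"
    by simp
  moreover have "coprime d D"
    using coprime_divisors[OF dn dvd_refl \<open>coprime n D\<close>] .
  ultimately have "d dvd b^2"
    by (simp add: coprime_dvd_mult_right_iff)
  moreover have "coprime d (b^2)"
    using coprime_divisors[OF da dvd_refl \<open>coprime a b\<close>] by simp
  ultimately show "is_unit d"
    by (meson coprime_common_divisor dvd_refl)
qed

lemma coprime_norm_snd:
  fixes a b D n :: int
  assumes sol: "a^2 - D*b^2 = n" and "coprime a b"
  shows "coprime n b"
proof (rule coprimeI)
  fix d assume dn: "d dvd n" and db: "d dvd b"
  have "d dvd n + D*b^2"
    using dn db by (simp add: power2_eq_square)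
  then have "d dvd a^2"
    using sol by (simp add: algebra_simps)
  moreover have "coprime (a^2) d"
    using coprime_divisors[OF dvd_refl db \<open>coprime a b\<close>] by simp
  ultimately show "is_unit d"
    by (meson coprime_common_divisor dvd_refl)
qed

lemma dvd_composition_fst:
  fixes a b a' b' D m :: int
  assumes "m dvd a^2 - D*b^2" and "coprime m a" and "m dvd a*b' - b*a'"
  shows "m dvd a*a' - D*b*b'"
proof -
  have "m dvd a * (a*a' - D*b*b')"
    unfolding composition_fst_identity using assms(1,3) by simp
  then show ?thesis
    using assms(2) by (simp add: coprime_dvd_mult_right_iff)
qed

lemma pell_equiv_of_dvd:
  fixes a b a' b' D n :: int
  assumes "a^2 - D*b^2 = n" and "coprime n a" and "n dvd a*b' - b*a'"
  shows "pell_equiv D n (a, b) (a', b')"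
  using dvd_composition_fst[of n a D b b' a'] assms
  by (simp add: pell_equiv_def cong_iff_dvd_diff mult.assoc)

lemma primitive_of_coprime_snd:
  fixes x y D m :: int
  assumes sol: "x^2 - D*y^2 = m" and "coprime y m"
  shows "coprime x y"
proof (rule coprimeI)
  fix c assume cx: "c dvd x" and cy: "c dvd y"
  have "c dvd m"
    using cx cy sol by (metis dvd_diff dvd_mult2 power2_eq_square dvd_mult)
  then show "is_unit c"
    using cy \<open>coprime y m\<close> coprime_common_divisor by blast
qed

lemma reduced_composition:
  fixes a b a' b' D g h :: int
  assumes sol: "a^2 - D*b^2 = (g*h)^2" and sol': "a'^2 - D*b'^2 = (g*h)^2"
    and "coprime (g*h) a" and gcd: "gcd ((g*h)^2) (a*b' - b*a') = g^2" and "g \<noteq> 0"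
  shows "\<exists>u v. coprime u v \<and> u^2 - D*v^2 = h^4"
proof -
  have "g^2 dvd a*b' - b*a'"
    by (metis gcd gcd_dvd2)
  then obtain y where y: "a*b' - b*a' = g^2 * y" ..
  have "g^2 dvd a*a' - D*b*b'"
    using \<open>coprime (g*h) a\<close> \<open>g^2 dvd a*b' - b*a'\<close>
    by (intro dvd_composition_fst) (simp_all add: sol power_mult_distrib)
  then obtain x where x: "a*a' - D*b*b' = g^2 * x" ..
  have "g^4 * (x^2 - D*y^2) = (a*a' - D*b*b')^2 - D*(a*b' - b*a')^2"
    unfolding x y by (simp add: algebra_simps flip: power_mult)
  also have "\<dots> = g^4 * h^4"
    unfolding composition_norm sol sol' by (simp add: eval_nat_numeral ac_simps)
  finally have norm: "x^2 - D*y^2 = h^4"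
    using \<open>g \<noteq> 0\<close> by simp
  have "g^2 * gcd (h^2) y = g^2 * 1"
    using gcd gcd_mult_distrib_int[of "g^2" "h^2" y] unfolding y
    by (simp add: power_mult_distrib)
  then have "coprime (h^2) y"
    using \<open>g \<noteq> 0\<close> by (simp add: coprime_iff_gcd_eq_1)
  then have "coprime y (h^4)"
    by (simp add: coprime_commute)
  with norm show ?thesis
    using primitive_of_coprime_snd by blast
qed

lemma gcd_product_eq:
  fixes n y y' :: int
  assumes "n \<ge> 0" and "n dvd y * y'" and "coprime (gcd n y) (gcd n y')"
  shows "gcd n y * gcd n y' = n"
proof (rule zdvd_antisym_nonneg)
  show "0 \<le> gcd n y * gcd n y'"
    by simp
  show "0 \<le> n"
    by (fact assms(1))
  show "gcd n y * gcd n y' dvd n"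
    using assms(3) by (simp add: divides_mult)
  have "gcd n y * gcd n y' = gcd (gcd n y * n) (gcd n y * y')"
    by (metis abs_gcd_int gcd_mult_distrib_int)
  moreover have "n dvd gcd n y * y'"
  proof -
    have "n dvd gcd (y' * n) (y' * y)"
      using assms(2) by (simp add: mult.commute)
    then have "n dvd \<bar>y'\<bar> * gcd n y"
      by (simp add: gcd_mult_distrib_int)
    then show ?thesis
      by (metis abs_gcd_int abs_mult dvd_abs_iff mult.commute)
  qed
  then have "n dvd gcd (gcd n y * n) (gcd n y * y')"
    by (simp add: gcd_greatest)
  ultimately show "n dvd gcd n y * gcd n y'"
    by (simp only:)
qed

lemma coprime_factor_of_square:
  fixes G H k :: int
  assumes "G > 0" and "H > 0" and "coprime G H" and "G * H = k^2"
  shows "\<exists>g > 0. G = g^2"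
proof -
  have "coprime (nat G) (nat H)"
    using assms(1-3) by (metis coprime_int_iff int_nat_eq less_le)
  moreover have "nat G * nat H = (nat \<bar>k\<bar>)^2"
  proof -
    have "nat G * nat H = nat (G * H)"
      using assms(1) by (simp add: nat_mult_distrib)
    also have "\<dots> = nat (\<bar>k\<bar>^2)"
      using assms(4) by simp
    also have "\<dots> = (nat \<bar>k\<bar>)^2"
      by (rule nat_power_eq) simp
    finally show ?thesis .
  qed
  then have "is_nth_power 2 (nat G * nat H)"
    by (rule is_nth_powerI)
  ultimately have "is_nth_power 2 (nat G)"
    by (simp add: is_nth_power_mult_coprime_nat_iff)
  then obtain g where "nat G = g^2"
    by (rule is_nth_powerE)
  then have "G = (int g)^2"
    using assms(1) by (metis int_nat_eq of_nat_power less_le)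
  then show ?thesis
    using assms(1) by (intro exI[of _ "int g"]) auto
qed

lemma square_modulus_split:
  fixes k y y' :: int
  assumes "k > 0" and "k^2 dvd y * y'" and cop: "coprime (gcd (k^2) y) (gcd (k^2) y')"
  shows "\<exists>p q. p > 0 \<and> q > 0 \<and> k = p * q \<and> gcd (k^2) y = p^2 \<and> gcd (k^2) y' = q^2"
proof -
  have prod: "gcd (k^2) y * gcd (k^2) y' = k^2"
    using assms by (intro gcd_product_eq) simp_all
  have pos: "gcd (k^2) y > 0" "gcd (k^2) y' > 0"
    using \<open>k > 0\<close> by simp_all
  obtain p where p: "p > 0" "gcd (k^2) y = p^2"
    using coprime_factor_of_square[OF pos cop prod] by blast
  obtain q where q: "q > 0" "gcd (k^2) y' = q^2"
    using coprime_factor_of_square[OF pos(2,1) _ prod[unfolded mult.commute[of "gcd (k^2) y"]]]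
      cop by (auto simp: coprime_commute)
  have "k^2 = (p * q)^2"
    using prod p q by (simp add: power_mult_distrib)
  then have "k = p * q"
    using \<open>k > 0\<close> p q by simp
  with p q show ?thesis
    by blast
qed

lemma coprime_gcds_of_compositions:
  fixes a b a' b' n :: int
  assumes "coprime n (2*a*b')"
  shows "coprime (gcd n (a*b' - b*a')) (gcd n (a*b' + b*a'))"
proof (rule coprimeI)
  fix d assume d1: "d dvd gcd n (a*b' - b*a')" and d2: "d dvd gcd n (a*b' + b*a')"
  then have "d dvd (a*b' - b*a') + (a*b' + b*a')" and "d dvd n"
    by (meson dvd_add dvd_trans gcd_dvd1 gcd_dvd2)+
  then have "d dvd 2*a*b'"
    by (simp add: algebra_simps)
  with \<open>d dvd n\<close> show "is_unit d"
    using assms coprime_common_divisor by blast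
qed

lemma composition_split:
  fixes k a b a' b' D :: int
  assumes "k > 0" and "odd k" and D: "D = k^2 + 1"
    and sol: "a^2 - D*b^2 = k^2" and "coprime a b"
    and sol': "a'^2 - D*b'^2 = k^2" and "coprime a' b'"
  obtains p q where "p > 0" and "q > 0" and "k = p * q" and "coprime p q"
    and "gcd (k^2) (a*b' - b*a') = p^2" and "gcd (k^2) (a*b' + b*a') = q^2"
proof -
  have "coprime (k^2) a" and "coprime (k^2) b'"
    using coprime_norm_fst[OF sol \<open>coprime a b\<close>] coprime_norm_snd[OF sol' \<open>coprime a' b'\<close>]
    by (simp_all add: D)
  with \<open>odd k\<close> have cop: "coprime (k^2) (2*a*b')"
    by simp
  have "k^2 dvd (a*b' - b*a') * (a*b' + b*a')"
    unfolding composition_snd_product[of a b' b a' D] sol sol' by simp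
  then obtain p q where pq: "p > 0" "q > 0" "k = p * q"
      and gp: "gcd (k^2) (a*b' - b*a') = p^2" and gq: "gcd (k^2) (a*b' + b*a') = q^2"
    using square_modulus_split[OF \<open>k > 0\<close>] coprime_gcds_of_compositions[OF cop] by blast
  moreover have "coprime p q"
    using coprime_gcds_of_compositions[OF cop, of b a'] gp gq by simp
  ultimately show ?thesis
    using that by blast
qed

theorem lemma4p3:
  fixes k :: int and a b a' b' :: int
  assumes "k > 0" and "odd k"
    and "pell_sol (k^2 + 1) (k^2) a b" and "coprime a b"
    and "pell_sol (k^2 + 1) (k^2) a' b'" and "coprime a' b'"
    and "\<not> pell_equiv (k^2 + 1) (k^2) (a, b) (a', b')"
    and "\<not> pell_equiv (k^2 + 1) (k^2) (a, b) (a', - b')"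
  shows "\<exists>p q :: int. p > 1 \<and> q > 1 \<and> coprime p q \<and> k = p * q \<and>
           (\<exists>u1 v1. coprime u1 v1 \<and> u1^2 - (k^2 + 1) * v1^2 = p^4) \<and>
           (\<exists>u2 v2. coprime u2 v2 \<and> u2^2 - (k^2 + 1) * v2^2 = q^4)"
proof -
  define D where "D = k^2 + 1"
  have sol: "a^2 - D*b^2 = k^2" and sol': "a'^2 - D*b'^2 = k^2"
    using assms(3,5) by (simp_all add: pell_sol_def D_def)
  have ka: "coprime (k^2) a"
    using coprime_norm_fst[OF sol assms(4)] by (simp add: D_def)
  obtain p q where pq: "p > 0" "q > 0" "k = p * q" "coprime p q"
      and gp: "gcd (k^2) (a*b' - b*a') = p^2" and gq: "gcd (k^2) (a*b' + b*a') = q^2"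
    using composition_split[OF assms(1,2) D_def sol assms(4) sol' assms(6)] by blast
  have gq': "gcd (k^2) (a*(-b') - b*a') = q^2"
    using gq by (simp add: gcd_neg2 [symmetric, of _ "a*b' + b*a'"])
  have rep_q: "\<exists>u v. coprime u v \<and> u^2 - D*v^2 = q^4"
    using reduced_composition[of a D b p q a' b'] sol sol' ka gp pq by simp
  have rep_p: "\<exists>u v. coprime u v \<and> u^2 - D*v^2 = p^4"
    using reduced_composition[of a D b q p a' "- b'"] sol sol' ka gq' pq by (simp add: mult.commute)
  have "p \<noteq> 1"
    using pell_equiv_of_dvd[OF sol ka] assms(8) gq' pq gcd_dvd2[of "k^2"] by (metis D_def mult_1)
  moreover have "q \<noteq> 1"
    using pell_equiv_of_dvd[OF sol ka] assms(7) gp pq gcd_dvd2[of "k^2"] by (metis D_def mult_1_right)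
  ultimately show ?thesis
    using pq rep_p rep_q unfolding D_def by (intro exI[of _ p] exI[of _ q]) auto
qed

end
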